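(* Let $\gamma\in PSL(n+1,\mathbb{C})$ be a projective transformation of $\mathbb{P}^n_{\mathbb{C}}$. Then: (1) $\gamma$ is loxodromic if and only if there are two distinct points $x,y\in \mathrm{Fix}(\gamma)$ such that the action of $\gamma$ restricted to the complex projective line $\langle\langle x,y\rangle\rangle$ is loxodromic. (2) $\gamma$ is parabolic if and only if every lift $\widetilde\gamma\in SL(n+1,\mathbb{C})$ of $\gamma$ is non-diagonalizable and for every couple of distinct points $x,y\in \mathrm{Fix}(\gamma)$ the action of $\gamma$ restricted to the complex projective line $\langle\langle x,y\rangle\rangle$ is elliptic. (3) $\gamma$ is elliptic if and only if every lift $\widetilde\gamma\in SL(n+1,\mathbb{C})$ of $\gamma$ is diagonalizable and for every couple of distinct points $x,y\in \mathrm{Fix}(\gamma)$ the action of $\gamma$ restricted to the complex projective line $\langle\langle x,y\rangle\rangle$ is elliptic.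
   Context: $PSL(n+1,\mathbb{C})$ acts on $\mathbb{P}^n_{\mathbb{C}}=(\mathbb{C}^{n+1}\setminus\{0\})/\mathbb{C}^*$; a lift of $\gamma$ is a matrix $\widetilde\gamma\in SL(n+1,\mathbb{C})$ projecting to $\gamma$. $\mathrm{Fix}(\gamma)$ denotes the set of fixed points of $\gamma$ in $\mathbb{P}^n_{\mathbb{C}}$, and for a set of points $P$, $\langle\langle P\rangle\rangle$ is the smallest projective subspace containing $P$ (so for distinct $x,y$ it is the projective line through them). The classification used: $\gamma$ is elliptic if every lift $\widetilde\gamma$ is diagonalizable with all eigenvalues of modulus one; $\gamma$ is loxodromic if every lift $\widetilde\gamma$ has an eigenvalue of modulus different from one; $\gamma$ is parabolic if every lift $\widetilde\gamma$ has only eigenvalues of modulus one and is non-diagonalizable. The same classification applies to the restriction of $\gamma$ to an invariant projective line (an element of $PSL(2,\mathbb{C})$). *)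

theory Defs
  imports "HOL-Analysis.Analysis"
begin

text \<open>A projective transformation of P^n is represented by a matrix
  A in GL(n+1,C) (index type 'n with CARD('n) = n+1); in the theorem A is
  taken in SL(n+1,C). Points of P^n are represented by nonzero vectors.\<close>

definition scale_mat :: "complex \<Rightarrow> complex^'n^'n \<Rightarrow> complex^'n^'n" where
  "scale_mat c A = (\<chi> i j. c * A$i$j)"

definition lifts :: "complex^'n^'n \<Rightarrow> (complex^'n^'n) set" where
  "lifts A = {B. (\<exists>c. B = scale_mat c A) \<and> det B = 1}"

definition diagonalizable_mat :: "complex^'n^'n \<Rightarrow> bool" where
  "diagonalizable_mat B \<longleftrightarrow> (\<exists>(P::complex^'n^'n) (D::complex^'n^'n). invertible P \<and> (\<forall>i j. i \<noteq> j \<longrightarrow> D$i$j = 0)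
      \<and> B = P ** D ** matrix_inv P)"

definition is_eigenvalue :: "complex^'n^'n \<Rightarrow> complex \<Rightarrow> bool" where
  "is_eigenvalue B l \<longleftrightarrow> (\<exists>v. v \<noteq> 0 \<and> B *v v = l *s v)"

definition proj_elliptic :: "complex^'n^'n \<Rightarrow> bool" where
  "proj_elliptic A \<longleftrightarrow> (\<forall>B\<in>lifts A. diagonalizable_mat B \<and> (\<forall>l. is_eigenvalue B l \<longrightarrow> norm l = 1))"

definition proj_loxodromic :: "complex^'n^'n \<Rightarrow> bool" where
  "proj_loxodromic A \<longleftrightarrow> (\<forall>B\<in>lifts A. \<exists>l. is_eigenvalue B l \<and> norm l \<noteq> 1)"

definition proj_parabolic :: "complex^'n^'n \<Rightarrow> bool" where
  "proj_parabolic A \<longleftrightarrow> (\<forall>B\<in>lifts A. \<not> diagonalizable_mat B \<and> (\<forall>l. is_eigenvalue B l \<longrightarrow> norm l = 1))"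

definition proj_fixed :: "complex^'n^'n \<Rightarrow> complex^'n \<Rightarrow> bool" where
  "proj_fixed A v \<longleftrightarrow> v \<noteq> 0 \<and> (\<exists>c. A *v v = c *s v)"

definition proj_distinct :: "complex^'n \<Rightarrow> complex^'n \<Rightarrow> bool" where
  "proj_distinct v w \<longleftrightarrow> v \<noteq> 0 \<and> w \<noteq> 0 \<and> \<not> (\<exists>c. w = c *s v)"

text \<open>M (a 2x2 matrix) is the matrix of the restriction of A to the plane spanned by
  v, w (i.e. to the projective line through [v],[w]) w.r.t. the basis v, w.\<close>
definition restricts_to :: "complex^'n^'n \<Rightarrow> complex^'n \<Rightarrow> complex^'n \<Rightarrow> complex^2^2 \<Rightarrow> bool" where
  "restricts_to A v w M \<longleftrightarrow> (\<forall>a b. A *v (a *s v + b *s w) =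
      (M$1$1 * a + M$1$2 * b) *s v + (M$2$1 * a + M$2$2 * b) *s w)"

definition restr_loxodromic :: "complex^'n^'n \<Rightarrow> complex^'n \<Rightarrow> complex^'n \<Rightarrow> bool" where
  "restr_loxodromic A v w \<longleftrightarrow> (\<exists>M. restricts_to A v w M \<and> proj_loxodromic M)"

definition restr_elliptic :: "complex^'n^'n \<Rightarrow> complex^'n \<Rightarrow> complex^'n \<Rightarrow> bool" where
  "restr_elliptic A v w \<longleftrightarrow> (\<exists>M. restricts_to A v w M \<and> proj_elliptic M)"

end

theory Submission
  imports Defs "HOL-Computational_Algebra.Fundamental_Theorem_Algebra"
begin

text \<open>All three types are governed by the moduli of the eigenvalues. A lift of a matrix of
  determinant 1 differs from it by a root of unity, so the moduli of its eigenvalues, and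
  hence loxodromy (some modulus \<open>\<noteq> 1\<close>) and the condition "all moduli are 1", are the
  same for every lift. Two distinct fixed points are eigenvectors, and on the line through
  them the map is \<open>diag(l, m)\<close>, which is elliptic iff \<open>|l| = |m|\<close> and loxodromic otherwise.
  So all these restrictions are elliptic iff all eigenvalues have a common modulus, and since
  the determinant is the product of the eigenvalues this modulus is 1.\<close>

lemma matrix_vector_mult_mat: "(mat x :: complex^'n^'n) *v v = x *s v"
  by (simp add: vec_eq_iff matrix_vector_mult_def mat_def if_distrib if_distribR sum.delta cong: if_cong)

lemma scale_mat_eq_mat_mult: "scale_mat c (A::complex^'n^'n) = mat c ** A"
  by (simp add: vec_eq_iff scale_mat_def matrix_matrix_mult_def mat_def if_distrib if_distribR
      sum.delta cong: if_cong)

lemma det_scale_mat: "det (scale_mat c (A::complex^'n^'n)) = c ^ CARD('n) * det A"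
  unfolding scale_mat_eq_mat_mult det_mul by (simp add: det_diagonal mat_def)

lemma scale_mat_vector_mult: "scale_mat c (A::complex^'n^'n) *v v = c *s (A *v v)"
  unfolding scale_mat_eq_mat_mult
  by (simp add: matrix_vector_mul_assoc[symmetric] matrix_vector_mult_mat)

lemma scale_mat_scale_mat: "scale_mat d (scale_mat c A) = scale_mat (d * c) (A::complex^'n^'n)"
  by (simp add: scale_mat_def vec_eq_iff)

lemma scale_mat_1: "scale_mat 1 (A::complex^'n^'n) = A"
  by (simp add: scale_mat_def vec_eq_iff)

subsection \<open>Eigenvalues and lifts\<close>

definition eigenvalues_unimodular :: "complex^'n^'n \<Rightarrow> bool" where
  "eigenvalues_unimodular A \<longleftrightarrow> (\<forall>l. is_eigenvalue A l \<longrightarrow> norm l = 1)"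

lemma is_eigenvalue_scale_mat:
  fixes A :: "complex^'n^'n"
  assumes "c \<noteq> 0"
  shows "is_eigenvalue (scale_mat c A) l \<longleftrightarrow> is_eigenvalue A (l / c)"
proof -
  have "c *s (A *v v) = l *s v \<longleftrightarrow> A *v v = (l / c) *s v" for v :: "complex^'n"
    using assms by (auto simp: vec_eq_iff field_simps)
  thus ?thesis unfolding is_eigenvalue_def scale_mat_vector_mult by simp
qed

lemma eigenvalues_unimodular_scale_mat:
  fixes A :: "complex^'n^'n"
  assumes "norm c = 1"
  shows "eigenvalues_unimodular (scale_mat c A) \<longleftrightarrow> eigenvalues_unimodular A"
proof -
  have c: "c \<noteq> 0" using assms by auto
  have "is_eigenvalue (scale_mat c A) (c * l) \<longleftrightarrow> is_eigenvalue A l" for l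
    using c by (simp add: is_eigenvalue_scale_mat)
  moreover have "l = c * (l / c)" for l using c by simp
  ultimately show ?thesis
    unfolding eigenvalues_unimodular_def using assms
    by (metis norm_mult mult_1)
qed

lemma eigenvalue_nonzero:
  fixes A :: "complex^'n^'n"
  assumes "det A \<noteq> 0" "A *v v = l *s v" "v \<noteq> 0"
  shows "l \<noteq> 0"
proof
  assume "l = 0"
  hence "A *v v = A *v 0" using assms(2) by simp
  moreover have "inj ((*v) A)" using assms(1) invertible_det_nz inj_matrix_vector_mult by blast
  ultimately show False using assms(3) by (meson injD)
qed

lemma lifts_self: "det A = 1 \<Longrightarrow> (A::complex^'n^'n) \<in> lifts A"
  unfolding lifts_def by (metis (mono_tags) mem_Collect_eq scale_mat_1)

lemma lifts_scale_mat:
  fixes A :: "complex^'n^'n"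
  assumes "c \<noteq> 0"
  shows "lifts (scale_mat c A) = lifts A"
proof -
  have "(\<exists>d. B = scale_mat d (scale_mat c A)) \<longleftrightarrow> (\<exists>d. B = scale_mat d A)" for B
    using assms unfolding scale_mat_scale_mat
    by (metis nonzero_eq_divide_eq times_divide_eq_left)
  thus ?thesis unfolding lifts_def by blast
qed

text \<open>The scalar is an \<open>n\<close>-th root of unity.\<close>

lemma lifts_unimodular_scale_mat:
  fixes A :: "complex^'n^'n"
  assumes "det A = 1" "B \<in> lifts A"
  obtains c where "B = scale_mat c A" "norm c = 1"
proof -
  obtain c where B: "B = scale_mat c A" and "det B = 1" using assms(2) unfolding lifts_def by blast
  hence "c ^ CARD('n) = 1" using assms(1) by (simp add: det_scale_mat)
  hence "norm c ^ CARD('n) = 1" by (metis norm_one norm_power)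
  hence "norm c = 1" using power_eq_1_iff[of "norm c" "CARD('n)"] by simp
  thus ?thesis using B that by blast
qed

lemma eigenvalues_unimodular_lifts:
  fixes A :: "complex^'n^'n"
  assumes "det A = 1" "B \<in> lifts A"
  shows "eigenvalues_unimodular B \<longleftrightarrow> eigenvalues_unimodular A"
  using lifts_unimodular_scale_mat[OF assms] eigenvalues_unimodular_scale_mat by metis

lemma proj_loxodromic_iff:
  fixes A :: "complex^'n^'n"
  assumes "det A = 1"
  shows "proj_loxodromic A \<longleftrightarrow> \<not> eigenvalues_unimodular A"
  using eigenvalues_unimodular_lifts[OF assms] lifts_self[OF assms]
  unfolding proj_loxodromic_def eigenvalues_unimodular_def by metis

lemma proj_elliptic_iff:
  fixes A :: "complex^'n^'n"
  assumes "det A = 1"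
  shows "proj_elliptic A \<longleftrightarrow> (\<forall>B\<in>lifts A. diagonalizable_mat B) \<and> eigenvalues_unimodular A"
  using eigenvalues_unimodular_lifts[OF assms] lifts_self[OF assms]
  unfolding proj_elliptic_def eigenvalues_unimodular_def[symmetric] by metis

lemma proj_parabolic_iff:
  fixes A :: "complex^'n^'n"
  assumes "det A = 1"
  shows "proj_parabolic A \<longleftrightarrow> (\<forall>B\<in>lifts A. \<not> diagonalizable_mat B) \<and> eigenvalues_unimodular A"
  using eigenvalues_unimodular_lifts[OF assms] lifts_self[OF assms]
  unfolding proj_parabolic_def eigenvalues_unimodular_def[symmetric] by metis

subsection \<open>The determinant as product of the eigenvalues\<close>

definition charpoly :: "complex^'n^'n \<Rightarrow> complex poly" where
  "charpoly A = det (\<chi> i j. (if i = j then [:- A$i$j, 1:] else [:- A$i$j:]))"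

lemma poly_charpoly: "poly (charpoly A) x = det (mat x - A)"
  unfolding charpoly_def det_def poly_sum poly_prod
  by (intro sum.cong refl) (auto simp: mat_def of_int_poly poly_prod intro!: prod.cong)

text \<open>Only the identity permutation contributes to the coefficient of \<open>x\<^sup>n\<close>: every other
  permutation moves some index and so meets fewer than \<open>n\<close> diagonal entries.\<close>

lemma charpoly_monic:
  fixes A :: "complex^'n^'n"
  shows "degree (charpoly A) = CARD('n) \<and> lead_coeff (charpoly A) = 1"
proof -
  define M where "M = (\<chi> i j. (if i = j then [:- A$i$j, 1:] else [:- A$i$j:]))"
  define E where "E = (\<lambda>p. of_int (sign p) * (\<Prod>i\<in>UNIV. M$i$p i) :: complex poly)"
  define S where "S = {p. p permutes (UNIV::'n set)}"
  have cp: "charpoly A = E id + sum E (S - {id})"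
    unfolding charpoly_def M_def[symmetric] det_def E_def[symmetric] S_def[symmetric]
    by (simp add: sum.remove S_def finite_permutations permutes_id)
  have Eid: "E id = (\<Prod>i\<in>UNIV. [:- A$i$i, 1:])" unfolding E_def M_def by (simp add: sign_id)
  have degid: "degree (E id) = CARD('n)" unfolding Eid
    by (subst degree_prod_sum_eq) auto
  have coid: "coeff (E id) CARD('n) = 1"
    using lead_coeff_prod[of "\<lambda>i. [:- A$i$i, 1:]" UNIV] degid unfolding Eid by simp
  have lt: "degree (E p) < CARD('n)" if "p \<noteq> id" for p
  proof -
    obtain k where k: "p k \<noteq> k" using \<open>p \<noteq> id\<close> by (auto simp: fun_eq_iff)
    have "degree (E p) \<le> degree (\<Prod>i\<in>UNIV. M$i$p i)"
      unfolding E_def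
      using degree_mult_le[of "of_int (sign p) :: complex poly" "\<Prod>i\<in>UNIV. M$i$p i"] by simp
    also have "\<dots> \<le> (\<Sum>i\<in>UNIV. degree (M$i$p i))"
      using degree_prod_sum_le[of UNIV "\<lambda>i. M$i$p i"] by (simp add: o_def)
    also have "\<dots> \<le> (\<Sum>i\<in>UNIV. (if p i = i then 1 else 0))"
      by (intro sum_mono) (auto simp: M_def)
    also have "\<dots> = card {i. p i = i}" by (simp add: sum.If_cases)
    also have "\<dots> < CARD('n)"
      by (rule psubset_card_mono) (use k in auto)
    finally show ?thesis .
  qed
  have "coeff (sum E (S - {id})) CARD('n) = 0"
    unfolding coeff_sum by (intro sum.neutral) (use lt in \<open>auto intro!: coeff_eq_0\<close>)
  hence co: "coeff (charpoly A) CARD('n) = 1" unfolding cp coeff_add coid by simp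
  have "degree (sum E (S - {id})) \<le> CARD('n)"
    by (rule degree_sum_le) (use lt in \<open>auto intro: less_imp_le simp: S_def finite_permutations\<close>)
  hence "degree (charpoly A) \<le> CARD('n)" unfolding cp using degid by (simp add: degree_add_le)
  thus ?thesis using co le_degree[of "charpoly A" "CARD('n)"] by auto
qed

lemma is_eigenvalue_if_det_eq_0:
  fixes A :: "complex^'n^'n"
  assumes "det (mat x - A) = 0"
  shows "is_eigenvalue A x"
proof -
  have "\<not> inj ((*v) (mat x - A))"
    using assms invertible_det_nz by (metis invertible_left_inverse matrix_left_invertible_injective)
  then obtain v where "v \<noteq> 0" "(mat x - A) *v v = 0" using vec.inj_iff_eq_0 by blast
  thus ?thesis
    unfolding is_eigenvalue_def matrix_vector_mult_diff_rdistrib matrix_vector_mult_mat by auto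
qed

text \<open>Factor the characteristic polynomial: its value at 0 is \<open>det (-A) = \<plusminus>1\<close> and also
  the product of the \<open>n\<close> roots, all eigenvalues of the same modulus \<open>r\<close>; so \<open>r\<^sup>n = 1\<close>.\<close>

lemma eigenvalues_unimodular_if_equal_norms:
  fixes A :: "complex^'n^'n"
  assumes det: "det A = 1"
    and equal: "\<And>l m. is_eigenvalue A l \<Longrightarrow> is_eigenvalue A m \<Longrightarrow> norm l = norm m"
  shows "eigenvalues_unimodular A"
  unfolding eigenvalues_unimodular_def
proof (intro allI impI)
  fix l assume l: "is_eigenvalue A l"
  let ?p = "charpoly A" and ?n = "CARD('n)"
  obtain root where "smult (lead_coeff ?p) (\<Prod>i<degree ?p. [:-root i, 1:]) = ?p"
    using complex_poly_decompose' by blast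
  hence p: "?p = (\<Prod>i<?n. [:-root i, 1:])" using charpoly_monic[of A] by (metis smult_1_left)
  have "poly ?p (root i) = 0" if "i < ?n" for i
    unfolding p poly_prod using that by (intro prod_zero) auto
  hence "is_eigenvalue A (root i)" if "i < ?n" for i
    using that is_eigenvalue_if_det_eq_0 poly_charpoly by metis
  hence "norm (poly ?p 0) = norm l ^ ?n"
    unfolding p poly_prod by (simp add: prod_norm[symmetric] equal[OF _ l])
  moreover have "poly ?p 0 = det (scale_mat (-1) A)"
    unfolding poly_charpoly by (rule arg_cong[where f=det]) (simp add: vec_eq_iff scale_mat_def mat_def)
  ultimately have "norm l ^ ?n = 1" by (simp add: det det_scale_mat norm_power)
  thus "norm l = 1" using power_eq_1_iff[of "norm l" ?n] by simp
qed

lemma eigenvalues_unimodular_iff_equal_norms: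
  fixes A :: "complex^'n^'n"
  assumes "det A = 1"
  shows "eigenvalues_unimodular A \<longleftrightarrow>
    (\<forall>l m. is_eigenvalue A l \<longrightarrow> is_eigenvalue A m \<longrightarrow> norm l = norm m)"
  using eigenvalues_unimodular_if_equal_norms[OF assms] unfolding eigenvalues_unimodular_def
  by metis

subsection \<open>Diagonal maps of the projective line\<close>

definition diagm :: "complex \<Rightarrow> complex \<Rightarrow> complex^2^2" where
  "diagm a b = (\<chi> i j. if i = 1 \<and> j = 1 then a else if i = 2 \<and> j = 2 then b else 0)"

lemma diagm_nth [simp]:
  "diagm a b $ 1 $ 1 = a" "diagm a b $ 2 $ 2 = b" "diagm a b $ 1 $ 2 = 0" "diagm a b $ 2 $ 1 = 0"
  by (simp_all add: diagm_def)

lemma is_eigenvalue_diagm: "is_eigenvalue (diagm a b) x \<longleftrightarrow> x = a \<or> x = b"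
proof
  assume "is_eigenvalue (diagm a b) x"
  then obtain v where v: "v \<noteq> 0" "diagm a b *v v = x *s v" unfolding is_eigenvalue_def by blast
  from v(2) have "a * v$1 = x * v$1" "b * v$2 = x * v$2"
    by (auto simp: vec_eq_iff matrix_vector_mult_def sum_2 forall_2)
  moreover from v(1) have "v$1 \<noteq> 0 \<or> v$2 \<noteq> 0" by (auto simp: vec_eq_iff forall_2)
  ultimately show "x = a \<or> x = b" by auto
next
  have "diagm a b *v axis 1 1 = a *s axis 1 1" "diagm a b *v axis 2 1 = b *s axis 2 1"
    by (auto simp: vec_eq_iff matrix_vector_mult_def sum_2 forall_2 axis_def)
  moreover have "axis 1 1 \<noteq> (0::complex^2)" "axis 2 1 \<noteq> (0::complex^2)"
    by (simp_all add: axis_eq_0_iff)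
  ultimately show "x = a \<or> x = b \<Longrightarrow> is_eigenvalue (diagm a b) x"
    unfolding is_eigenvalue_def by blast
qed

lemma scale_mat_diagm: "scale_mat c (diagm a b) = diagm (c * a) (c * b)"
  by (auto simp: vec_eq_iff scale_mat_def diagm_def forall_2)

lemma det_diagm: "det (diagm a b) = a * b"
  by (simp add: det_2)

lemma diagonalizable_diagm: "diagonalizable_mat (diagm a b)"
  unfolding diagonalizable_mat_def
proof (intro exI conjI)
  show "invertible (mat 1 :: complex^2^2)" by (simp add: invertible_det_nz)
  show "\<forall>i j. i \<noteq> j \<longrightarrow> diagm a b $ i $ j = 0" by (auto simp: diagm_def)
  have "matrix_inv (mat 1 :: complex^2^2) = mat 1"
    unfolding matrix_inv_def by (rule some_equality) (auto simp: matrix_mul_lid)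
  thus "diagm a b = mat 1 ** diagm a b ** matrix_inv (mat 1)" by simp
qed

lemma diagonalizable_lifts_diagm: "B \<in> lifts (diagm a b) \<Longrightarrow> diagonalizable_mat B"
  unfolding lifts_def scale_mat_diagm using diagonalizable_diagm by blast

lemma eigenvalues_unimodular_diagm:
  assumes "x * y = 1"
  shows "eigenvalues_unimodular (diagm x y) \<longleftrightarrow> norm x = norm y"
proof -
  have xy: "norm x * norm y = 1" using assms by (metis norm_mult norm_one)
  have "norm x = 1 \<and> norm y = 1 \<longleftrightarrow> norm x = norm y"
  proof
    assume "norm x = norm y"
    with xy have "norm x ^ 2 = 1" by (simp add: power2_eq_square)
    hence "norm x = 1" by (smt (verit) norm_ge_zero power2_eq_1_iff)
    thus "norm x = 1 \<and> norm y = 1" using \<open>norm x = norm y\<close> by simp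
  qed simp
  thus ?thesis unfolding eigenvalues_unimodular_def is_eigenvalue_diagm by blast
qed

text \<open>The types of a map depend only on its lifts, so a diagonal map may be rescaled to
  determinant 1.\<close>

lemma diagm_normalised:
  assumes "a \<noteq> 0" "b \<noteq> 0"
  obtains c where "lifts (diagm a b) = lifts (diagm (c * a) (c * b))"
    "det (diagm (c * a) (c * b)) = 1" "norm (c * a) = norm (c * b) \<longleftrightarrow> norm a = norm b"
proof
  let ?c = "1 / csqrt (a * b)"
  have c: "?c \<noteq> 0" using assms by simp
  show "lifts (diagm a b) = lifts (diagm (?c * a) (?c * b))"
    using lifts_scale_mat[OF c, of "diagm a b"] unfolding scale_mat_diagm by simp
  have "?c * a * (?c * b) = (a * b) / (csqrt (a * b))\<^sup>2"
    by (simp add: power2_eq_square field_simps)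
  thus "det (diagm (?c * a) (?c * b)) = 1" using assms by (simp add: det_diagm)
  show "norm (?c * a) = norm (?c * b) \<longleftrightarrow> norm a = norm b"
    using assms by (simp add: norm_divide divide_cancel_right)
qed

lemma proj_loxodromic_diagm:
  assumes "a \<noteq> 0" "b \<noteq> 0"
  shows "proj_loxodromic (diagm a b) \<longleftrightarrow> norm a \<noteq> norm b"
proof -
  obtain c where c: "lifts (diagm a b) = lifts (diagm (c * a) (c * b))"
    "det (diagm (c * a) (c * b)) = 1" "norm (c * a) = norm (c * b) \<longleftrightarrow> norm a = norm b"
    using diagm_normalised[OF assms] .
  have "proj_loxodromic (diagm a b) \<longleftrightarrow> proj_loxodromic (diagm (c * a) (c * b))"
    unfolding proj_loxodromic_def c(1) ..
  also have "\<dots> \<longleftrightarrow> \<not> eigenvalues_unimodular (diagm (c * a) (c * b))"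
    using proj_loxodromic_iff[OF c(2)] .
  also have "\<dots> \<longleftrightarrow> norm (c * a) \<noteq> norm (c * b)"
    using eigenvalues_unimodular_diagm c(2) unfolding det_diagm by simp
  finally show ?thesis using c(3) by simp
qed

lemma proj_elliptic_diagm:
  assumes "a \<noteq> 0" "b \<noteq> 0"
  shows "proj_elliptic (diagm a b) \<longleftrightarrow> norm a = norm b"
proof -
  obtain c where c: "lifts (diagm a b) = lifts (diagm (c * a) (c * b))"
    "det (diagm (c * a) (c * b)) = 1" "norm (c * a) = norm (c * b) \<longleftrightarrow> norm a = norm b"
    using diagm_normalised[OF assms] .
  have "proj_elliptic (diagm a b) \<longleftrightarrow> proj_elliptic (diagm (c * a) (c * b))"
    unfolding proj_elliptic_def c(1) ..
  also have "\<dots> \<longleftrightarrow> eigenvalues_unimodular (diagm (c * a) (c * b))"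
    using proj_elliptic_iff[OF c(2)] diagonalizable_lifts_diagm by blast
  also have "\<dots> \<longleftrightarrow> norm (c * a) = norm (c * b)"
    using eigenvalues_unimodular_diagm c(2) unfolding det_diagm by simp
  finally show ?thesis using c(3) by simp
qed

subsection \<open>Restrictions to lines through two fixed points\<close>

lemma proj_distinct_independent:
  assumes "proj_distinct v w" "a *s v + b *s w = (0::complex^'n)"
  shows "a = 0 \<and> b = 0"
proof (cases "b = 0")
  case True
  thus ?thesis using assms unfolding proj_distinct_def by simp
next
  case False
  hence "w = (- a / b) *s v" using assms(2)
    by (simp add: vec_eq_iff field_simps) (metis add.commute add_eq_0_iff mult.commute)
  thus ?thesis using assms(1) unfolding proj_distinct_def by blast
qed

lemma proj_distinct_eigenvectors:
  fixes A :: "complex^'n^'n"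
  assumes "A *v v = l *s v" "A *v w = m *s w" "v \<noteq> 0" "w \<noteq> 0" "l \<noteq> m"
  shows "proj_distinct v w"
proof -
  have "\<nexists>c. w = c *s v"
  proof
    assume "\<exists>c. w = c *s v"
    then obtain c where c: "w = c *s v" by blast
    with assms(4) have "c \<noteq> 0" by auto
    have "(c * l - m * c) *s v = 0"
      using assms(1,2) c by (simp add: vector_scalar_commute vector_smult_assoc vector_sub_rdistrib)
    hence "c * l = m * c" using assms(3) by simp
    thus False using \<open>c \<noteq> 0\<close> assms(5) by simp
  qed
  thus ?thesis using assms(3,4) unfolding proj_distinct_def by blast
qed

lemma restricts_to_eigenvectors_iff:
  fixes A :: "complex^'n^'n"
  assumes dis: "proj_distinct v w" and l: "A *v v = l *s v" and m: "A *v w = m *s w"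
  shows "restricts_to A v w M \<longleftrightarrow> M = diagm l m"
proof
  assume "M = diagm l m"
  thus "restricts_to A v w M" unfolding restricts_to_def
    by (simp add: matrix_vector_right_distrib vector_scalar_commute l m vector_smult_assoc
        mult.commute)
next
  assume R: "restricts_to A v w M"
  from R[unfolded restricts_to_def, rule_format, of 1 0]
  have "(M$1$1 - l) *s v + M$2$1 *s w = 0" using l by (simp add: vec_eq_iff algebra_simps)
  from proj_distinct_independent[OF dis this] have 1: "M$1$1 = l" "M$2$1 = 0" by auto
  from R[unfolded restricts_to_def, rule_format, of 0 1]
  have "M$1$2 *s v + (M$2$2 - m) *s w = 0" using m by (simp add: vec_eq_iff algebra_simps)
  from proj_distinct_independent[OF dis this] have 2: "M$1$2 = 0" "M$2$2 = m" by auto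
  show "M = diagm l m" using 1 2 by (simp add: vec_eq_iff forall_2)
qed

lemma
  fixes A :: "complex^'n^'n"
  assumes "proj_distinct v w" "A *v v = l *s v" "A *v w = m *s w" "l \<noteq> 0" "m \<noteq> 0"
  shows restr_elliptic_eigenvectors: "restr_elliptic A v w \<longleftrightarrow> norm l = norm m"
    and restr_loxodromic_eigenvectors: "restr_loxodromic A v w \<longleftrightarrow> norm l \<noteq> norm m"
  unfolding restr_elliptic_def restr_loxodromic_def restricts_to_eigenvectors_iff[OF assms(1-3)]
  using proj_elliptic_diagm[OF assms(4,5)] proj_loxodromic_diagm[OF assms(4,5)] by simp_all

lemma proj_fixed_eigenvalue:
  fixes A :: "complex^'n^'n"
  assumes "det A \<noteq> 0" "proj_fixed A v"
  obtains l where "A *v v = l *s v" "l \<noteq> 0" "is_eigenvalue A l"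
  using assms eigenvalue_nonzero unfolding proj_fixed_def is_eigenvalue_def by blast

lemma restr_loxodromic_iff_not_elliptic:
  fixes A :: "complex^'n^'n"
  assumes "det A \<noteq> 0" "proj_fixed A v" "proj_fixed A w" "proj_distinct v w"
  shows "restr_loxodromic A v w \<longleftrightarrow> \<not> restr_elliptic A v w"
proof -
  obtain l where l: "A *v v = l *s v" "l \<noteq> 0" using proj_fixed_eigenvalue[OF assms(1,2)] .
  obtain m where m: "A *v w = m *s w" "m \<noteq> 0" using proj_fixed_eigenvalue[OF assms(1,3)] .
  show ?thesis
    using restr_elliptic_eigenvectors[OF assms(4) l(1) m(1) l(2) m(2)]
      restr_loxodromic_eigenvectors[OF assms(4) l(1) m(1) l(2) m(2)] by simp
qed

lemma fixed_lines_elliptic_iff_equal_norms: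
  fixes A :: "complex^'n^'n"
  assumes det: "det A \<noteq> 0"
  shows "(\<forall>v w. proj_fixed A v \<and> proj_fixed A w \<and> proj_distinct v w \<longrightarrow> restr_elliptic A v w)
    \<longleftrightarrow> (\<forall>l m. is_eigenvalue A l \<longrightarrow> is_eigenvalue A m \<longrightarrow> norm l = norm m)"
proof (intro iffI allI impI)
  fix l m
  assume ell: "\<forall>v w. proj_fixed A v \<and> proj_fixed A w \<and> proj_distinct v w \<longrightarrow> restr_elliptic A v w"
    and l: "is_eigenvalue A l" and m: "is_eigenvalue A m"
  show "norm l = norm m"
  proof (cases "l = m")
    case False
    obtain v where v: "v \<noteq> 0" "A *v v = l *s v" using l unfolding is_eigenvalue_def by blast
    obtain w where w: "w \<noteq> 0" "A *v w = m *s w" using m unfolding is_eigenvalue_def by blast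
    have dis: "proj_distinct v w" using proj_distinct_eigenvectors v w False by blast
    hence "restr_elliptic A v w" using ell v w unfolding proj_fixed_def by blast
    thus ?thesis using restr_elliptic_eigenvectors[OF dis v(2) w(2)] eigenvalue_nonzero[OF det] v w
      by blast
  qed simp
next
  fix v w
  assume equal: "\<forall>l m. is_eigenvalue A l \<longrightarrow> is_eigenvalue A m \<longrightarrow> norm l = norm m"
    and vw: "proj_fixed A v \<and> proj_fixed A w \<and> proj_distinct v w"
  obtain l where l: "A *v v = l *s v" "l \<noteq> 0" "is_eigenvalue A l"
    using proj_fixed_eigenvalue det vw by blast
  obtain m where m: "A *v w = m *s w" "m \<noteq> 0" "is_eigenvalue A m"
    using proj_fixed_eigenvalue det vw by blast
  show "restr_elliptic A v w"
    using restr_elliptic_eigenvectors[OF _ l(1) m(1) l(2) m(2)] vw equal l(3) m(3) by blast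
qed

theorem mainTheorem5:
  fixes A :: "complex^'n^'n"
  assumes "det A = 1"
  shows "(proj_loxodromic A \<longleftrightarrow>
            (\<exists>v w. proj_fixed A v \<and> proj_fixed A w \<and> proj_distinct v w \<and> restr_loxodromic A v w))
       \<and> (proj_parabolic A \<longleftrightarrow>
            (\<forall>B\<in>lifts A. \<not> diagonalizable_mat B) \<and>
            (\<forall>v w. proj_fixed A v \<and> proj_fixed A w \<and> proj_distinct v w \<longrightarrow> restr_elliptic A v w))
       \<and> (proj_elliptic A \<longleftrightarrow>
            (\<forall>B\<in>lifts A. diagonalizable_mat B) \<and>
            (\<forall>v w. proj_fixed A v \<and> proj_fixed A w \<and> proj_distinct v w \<longrightarrow> restr_elliptic A v w))"
proof -
  have det: "det A \<noteq> 0" using assms by simp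
  have ell: "(\<forall>v w. proj_fixed A v \<and> proj_fixed A w \<and> proj_distinct v w \<longrightarrow> restr_elliptic A v w)
      \<longleftrightarrow> eigenvalues_unimodular A"
    using fixed_lines_elliptic_iff_equal_norms[OF det] eigenvalues_unimodular_iff_equal_norms[OF assms]
    by simp
  have lox: "(\<exists>v w. proj_fixed A v \<and> proj_fixed A w \<and> proj_distinct v w \<and> restr_loxodromic A v w)
      \<longleftrightarrow> \<not> eigenvalues_unimodular A"
    using restr_loxodromic_iff_not_elliptic[OF det] ell by blast
  show ?thesis
    using lox ell proj_loxodromic_iff[OF assms] proj_parabolic_iff[OF assms] proj_elliptic_iff[OF assms]
    by blast
qed

end
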